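(* For $\pi,\varrho\in K$ let $A_{\pi,\varrho}$ be the two-dimensional algebra with basis $r,r^2$ and multiplication $r\cdot r=r^2$, $r\cdot r^2=\pi r^2$, $r^2\cdot r=\varrho r^2$, $r^2\cdot r^2=\pi\varrho r^2$. Then every $A_{\pi,\varrho}$ is isomorphic to exactly one of the five algebras $A_{0,0},A_{1,1},A_{0,1},A_{1,0},A_{1,-1}$, and these five are pairwise nonisomorphic. Precisely: $A_{0,\varrho}\cong A_{0,1}$ for $\varrho\ne0$, $A_{\pi,0}\cong A_{1,0}$ for $\pi\neq0$, $A_{\pi,\pi}\cong A_{1,1}$ for $\pi\ne0$, and $A_{\pi,\varrho}\cong A_{1,-1}$ for $\pi\ne\varrho$ both nonzero.
   Context: $K$ is a field of characteristic $0$; algebras are not necessarily associative. *)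

theory Defs
  imports Main
begin

text \<open>The algebra A(pi,rho): elements (a,b) stand for a r + b r^2 in the basis r, r^2.
 Multiplication is the bilinear extension of r r = r^2, r r^2 = pi r^2, r^2 r = rho r^2,
 r^2 r^2 = pi rho r^2.\<close>

definition alg_mult :: "'a::field \<Rightarrow> 'a \<Rightarrow> 'a \<times> 'a \<Rightarrow> 'a \<times> 'a \<Rightarrow> 'a \<times> 'a" where
  "alg_mult p q x y =
     (0, fst x * fst y + p * fst x * snd y + q * snd x * fst y + p * q * snd x * snd y)"

definition lin2 :: "('a::field \<times> 'a \<Rightarrow> 'a \<times> 'a) \<Rightarrow> bool" where
  "lin2 f \<longleftrightarrow> (\<forall>x y. f (fst x + fst y, snd x + snd y) = (fst (f x) + fst (f y), snd (f x) + snd (f y)))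
              \<and> (\<forall>c x. f (c * fst x, c * snd x) = (c * fst (f x), c * snd (f x)))"

definition alg_iso :: "'a::field \<Rightarrow> 'a \<Rightarrow> 'a \<Rightarrow> 'a \<Rightarrow> bool" where
  "alg_iso p q p' q' \<longleftrightarrow> (\<exists>f. lin2 f \<and> bij f \<and>
      (\<forall>x y. f (alg_mult p q x y) = alg_mult p' q' (f x) (f y)))"

definition five_params :: "('a::field \<times> 'a) list" where
  "five_params = [(0,0), (1,1), (0,1), (1,0), (1,-1)]"

end

theory Submission
  imports Defs
begin

text \<open>Three properties of a multiplication are invariant under isomorphism: commutativity,
  the identity (x y) z = 0 and the identity x (y z) = 0. In A(pi,rho) they hold exactly when
  pi = rho, rho = 0 and pi = 0 respectively, and the five parameter pairs of the list realise
  five different combinations of them, so the listed algebras are pairwise nonisomorphic.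
  Conversely, each A(pi,rho) is carried to its listed representative by an explicit change of
  basis: a diagonal one r \<mapsto> c r when pi = 0, rho = 0 or pi = rho, and, when pi, rho and
  pi - rho are all nonzero, r \<mapsto> ((pi - rho) / 2) r - ((pi + rho) / 2) r^2, which is where
  characteristic \<noteq> 2 is needed.\<close>

locale bij_hom =
  fixes f :: "'a \<Rightarrow> 'b" and m :: "'a \<Rightarrow> 'a \<Rightarrow> 'a" and m' :: "'b \<Rightarrow> 'b \<Rightarrow> 'b"
  assumes bij: "bij f"
    and hom: "\<And>x y. f (m x y) = m' (f x) (f y)"
begin

lemma commutative_iff: "(\<forall>x y. m x y = m y x) \<longleftrightarrow> (\<forall>x y. m' x y = m' y x)"
proof -
  have "(\<forall>x y. m x y = m y x) \<longleftrightarrow> (\<forall>x y. m' (f x) (f y) = m' (f y) (f x))"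
    using bij_is_inj[OF bij] by (metis hom injD)
  also have "\<dots> \<longleftrightarrow> (\<forall>x y. m' x y = m' y x)"
    using bij_is_surj[OF bij] by (metis surjD)
  finally show ?thesis .
qed

lemma left_annihilating_iff:
  assumes "f z = z'"
  shows "(\<forall>x y w. m (m x y) w = z) \<longleftrightarrow> (\<forall>x y w. m' (m' x y) w = z')"
proof -
  have "(\<forall>x y w. m (m x y) w = z) \<longleftrightarrow> (\<forall>x y w. m' (m' (f x) (f y)) (f w) = z')"
    using bij_is_inj[OF bij] assms by (metis hom injD)
  also have "\<dots> \<longleftrightarrow> (\<forall>x y w. m' (m' x y) w = z')"
    using bij_is_surj[OF bij] by (metis surjD)
  finally show ?thesis .
qed

lemma right_annihilating_iff:
  assumes "f z = z'"
  shows "(\<forall>x y w. m x (m y w) = z) \<longleftrightarrow> (\<forall>x y w. m' x (m' y w) = z')"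
proof -
  have "(\<forall>x y w. m x (m y w) = z) \<longleftrightarrow> (\<forall>x y w. m' (f x) (m' (f y) (f w)) = z')"
    using bij_is_inj[OF bij] assms by (metis hom injD)
  also have "\<dots> \<longleftrightarrow> (\<forall>x y w. m' x (m' y w) = z')"
    using bij_is_surj[OF bij] by (metis surjD)
  finally show ?thesis .
qed

end

lemma alg_mult_commutative_iff: "(\<forall>x y. alg_mult p q x y = alg_mult p q y x) \<longleftrightarrow> p = q"
proof
  assume "\<forall>x y. alg_mult p q x y = alg_mult p q y x"
  then have "alg_mult p q (1,0) (0,1) = alg_mult p q (0,1) (1,0)" by blast
  then show "p = q" by (simp add: alg_mult_def)
qed (auto simp: alg_mult_def algebra_simps)

lemma alg_mult_left_annihilating_iff:
  "(\<forall>x y w. alg_mult p q (alg_mult p q x y) w = (0,0)) \<longleftrightarrow> q = 0"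
proof
  assume "\<forall>x y w. alg_mult p q (alg_mult p q x y) w = (0,0)"
  then have "alg_mult p q (alg_mult p q (1,0) (1,0)) (1,0) = (0,0)" by blast
  then show "q = 0" by (simp add: alg_mult_def)
qed (auto simp: alg_mult_def)

lemma alg_mult_right_annihilating_iff:
  "(\<forall>x y w. alg_mult p q x (alg_mult p q y w) = (0,0)) \<longleftrightarrow> p = 0"
proof
  assume "\<forall>x y w. alg_mult p q x (alg_mult p q y w) = (0,0)"
  then have "alg_mult p q (1,0) (alg_mult p q (1,0) (1,0)) = (0,0)" by blast
  then show "p = 0" by (simp add: alg_mult_def)
qed (auto simp: alg_mult_def)

lemma lin2_zero: "lin2 f \<Longrightarrow> f (0,0) = (0,0)"
  unfolding lin2_def by (metis mult_zero_left fst_conv snd_conv)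

lemma alg_iso_invariants:
  assumes "alg_iso p q p' q'"
  shows "(p = q \<longleftrightarrow> p' = q') \<and> (p = 0 \<longleftrightarrow> p' = 0) \<and> (q = 0 \<longleftrightarrow> q' = 0)"
proof -
  obtain f where "lin2 f" "bij f" "\<And>x y. f (alg_mult p q x y) = alg_mult p' q' (f x) (f y)"
    using assms unfolding alg_iso_def by blast
  then interpret bij_hom f "alg_mult p q" "alg_mult p' q'"
    by unfold_locales
  have zero: "f (0,0) = (0,0)" using \<open>lin2 f\<close> by (rule lin2_zero)
  show ?thesis
    using commutative_iff left_annihilating_iff[OF zero] right_annihilating_iff[OF zero]
    unfolding alg_mult_commutative_iff alg_mult_left_annihilating_iff
      alg_mult_right_annihilating_iff
    by blast
qed

definition mat2 :: "'a::field \<Rightarrow> 'a \<Rightarrow> 'a \<Rightarrow> 'a \<Rightarrow> 'a \<times> 'a \<Rightarrow> 'a \<times> 'a" where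
  "mat2 a b c d x = (a * fst x + b * snd x, c * fst x + d * snd x)"

lemma lin2_mat2: "lin2 (mat2 a b c d)"
  unfolding lin2_def mat2_def by (auto simp: algebra_simps)

lemma bij_mat2:
  assumes det: "a * d - b * c \<noteq> 0"
  shows "bij (mat2 a b c d)"
proof (rule o_bij)
  define \<Delta> where "\<Delta> = a * d - b * c"
  have "\<Delta> \<noteq> 0" using det by (simp add: \<Delta>_def)
  let ?inverse = "mat2 (d / \<Delta>) (- b / \<Delta>) (- c / \<Delta>) (a / \<Delta>)"
  show "?inverse \<circ> mat2 a b c d = id" "mat2 a b c d \<circ> ?inverse = id"
    using \<open>\<Delta> \<noteq> 0\<close> by (auto simp: fun_eq_iff mat2_def field_simps \<Delta>_def[symmetric])
       (simp_all add: \<Delta>_def algebra_simps)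
qed

lemma alg_iso_by_mat2:
  assumes "a * d - b * c \<noteq> 0"
    and "\<And>x y. mat2 a b c d (alg_mult p q x y) = alg_mult p' q' (mat2 a b c d x) (mat2 a b c d y)"
  shows "alg_iso p q p' q'"
  unfolding alg_iso_def using lin2_mat2 bij_mat2[OF assms(1)] assms(2) by blast

lemma alg_iso_refl: "alg_iso p q p q"
  by (rule alg_iso_by_mat2[where a = 1 and b = 0 and c = 0 and d = 1]) (simp_all add: mat2_def)

lemma alg_iso_0q_01: "q \<noteq> 0 \<Longrightarrow> alg_iso 0 q 0 1"
  by (rule alg_iso_by_mat2[where a = q and b = 0 and c = 0 and d = "q * q"]) (auto simp: mat2_def alg_mult_def algebra_simps)

lemma alg_iso_p0_10: "p \<noteq> 0 \<Longrightarrow> alg_iso p 0 1 0"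
  by (rule alg_iso_by_mat2[where a = p and b = 0 and c = 0 and d = "p * p"]) (auto simp: mat2_def alg_mult_def algebra_simps)

lemma alg_iso_pp_11: "p \<noteq> 0 \<Longrightarrow> alg_iso p p 1 1"
  by (rule alg_iso_by_mat2[where a = p and b = 0 and c = 0 and d = "p * p"]) (auto simp: mat2_def alg_mult_def algebra_simps)

lemma alg_iso_pq_1m1:
  fixes p q :: "'a::field_char_0"
  assumes "p \<noteq> 0" "q \<noteq> 0" "p \<noteq> q"
  shows "alg_iso p q 1 (-1)"
  by (rule alg_iso_by_mat2[where a = "(p - q) / 2" and b = 0 and c = "- (p + q) / 2" and d = "- p * q"])
     (use assms in \<open>auto simp: mat2_def alg_mult_def field_simps\<close>)

lemma five_params_representative:
  fixes p q :: "'a::field_char_0"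
  shows "\<exists>i<5. alg_iso p q (fst (five_params ! i)) (snd (five_params ! i))"
proof -
  have "\<exists>(p', q') \<in> set five_params. alg_iso p q p' q'"
    using alg_iso_refl[of 0 0] alg_iso_0q_01[of q] alg_iso_p0_10[of p] alg_iso_pp_11[of p]
      alg_iso_pq_1m1[of p q]
    by (cases "p = 0"; cases "q = 0"; cases "p = q") (auto simp: five_params_def)
  then obtain p' q' where "(p', q') \<in> set five_params" "alg_iso p q p' q'"
    by blast
  moreover obtain i where "i < length (five_params :: ('a \<times> 'a) list)" "five_params ! i = (p', q')"
    using calculation(1) unfolding in_set_conv_nth by blast
  moreover have "length (five_params :: ('a \<times> 'a) list) = 5"
    by (simp add: five_params_def)
  ultimately show ?thesis
    by (metis fst_conv snd_conv)
qed

lemma five_params_separated_by_invariants: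
  fixes i j :: nat
  defines "P \<equiv> (five_params :: ('a::field_char_0 \<times> 'a) list)"
  assumes "i < 5" "j < 5"
    and "fst (P ! i) = snd (P ! i) \<longleftrightarrow> fst (P ! j) = snd (P ! j)"
    and "fst (P ! i) = 0 \<longleftrightarrow> fst (P ! j) = 0"
    and "snd (P ! i) = 0 \<longleftrightarrow> snd (P ! j) = 0"
  shows "i = j"
proof -
  have "i \<in> {0,1,2,3,4}" "j \<in> {0,1,2,3,4}" using assms(2,3) by auto
  then show ?thesis
    using assms(4-6) one_neq_neg_one[where 'a = 'a]
    by (auto simp: P_def five_params_def)
qed

theorem proposition5p1:
  fixes dummy :: "'a::field_char_0"
  shows "(\<forall>p q::'a. \<exists>!i. i < 5 \<and> alg_iso p q (fst (five_params ! i)) (snd (five_params ! i)))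
    \<and> (\<forall>i j. i < 5 \<longrightarrow> j < 5 \<longrightarrow> i \<noteq> j \<longrightarrow>
          \<not> alg_iso (fst ((five_params::('a\<times>'a) list) ! i)) (snd (five_params ! i))
                    (fst (five_params ! j)) (snd (five_params ! j)))
    \<and> (\<forall>q::'a. q \<noteq> 0 \<longrightarrow> alg_iso 0 q 0 1)
    \<and> (\<forall>p::'a. p \<noteq> 0 \<longrightarrow> alg_iso p 0 1 0)
    \<and> (\<forall>p::'a. p \<noteq> 0 \<longrightarrow> alg_iso p p 1 1)
    \<and> (\<forall>p q::'a. p \<noteq> 0 \<longrightarrow> q \<noteq> 0 \<longrightarrow> p \<noteq> q \<longrightarrow> alg_iso p q 1 (-1))"
proof (intro conjI allI impI)
  fix p q :: 'a
  show "\<exists>!i. i < 5 \<and> alg_iso p q (fst ((five_params::('a\<times>'a) list) ! i)) (snd (five_params ! i))"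
  proof (rule ex_ex1I)
    show "\<exists>i. i < 5 \<and> alg_iso p q (fst ((five_params::('a\<times>'a) list) ! i)) (snd (five_params ! i))"
      using five_params_representative by blast
  next
    fix i j
    assume "i < 5 \<and> alg_iso p q (fst ((five_params::('a\<times>'a) list) ! i)) (snd (five_params ! i))"
      and "j < 5 \<and> alg_iso p q (fst ((five_params::('a\<times>'a) list) ! j)) (snd (five_params ! j))"
    then show "i = j"
      using five_params_separated_by_invariants[of i j] alg_iso_invariants by blast
  qed
next
  fix i j :: nat
  assume "i < 5" "j < 5" "i \<noteq> j"
  then show "\<not> alg_iso (fst ((five_params::('a\<times>'a) list) ! i)) (snd (five_params ! i))
                    (fst (five_params ! j)) (snd (five_params ! j))"
    using five_params_separated_by_invariants[of i j] alg_iso_invariants by blast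
qed (auto intro: alg_iso_0q_01 alg_iso_p0_10 alg_iso_pp_11 alg_iso_pq_1m1)

end
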